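(* Let $\gamma_X=(X,d_X(\cdot))$ and $\gamma_Y=(Y,d_Y(\cdot))$ be any two dynamic metric spaces. Then \[\mathbf{d}_{\mathrm{I}}^{\mathbf{Sets}}(\theta(\gamma_X),\theta(\gamma_Y))\le 2\cdot d_{\mathtt{dyn}}(\gamma_X,\gamma_Y).\]
   Context: A dynamic metric space (DMS) is a pair $\gamma_X=(X,d_X(\cdot))$ where $X$ is a nonempty finite set and $d_X(\cdot):\mathbf{R}\times X\times X\to\mathbf{R}_+$ satisfies: each $d_X(t)$ is a pseudometric, some $d_X(t_0)$ is a metric, and $t\mapsto d_X(t)(x,x')$ is continuous for all $x,x'$. $\mathbf{Int}$ is the set of finite closed intervals of $\mathbf{R}$; $(\bigvee_I d_X)(x,x'):=\min_{s\in I}d_X(s)(x,x')$; for $I=[u,u']$, $I^\varepsilon=[u-\varepsilon,u'+\varepsilon]$; $[t]^\varepsilon=[t-\varepsilon,t+\varepsilon]$. A tripod between $X$ and $Y$ is a set $Z$ with surjections $\varphi_X:Z\to X$, $\varphi_Y:Z\to Y$; it is an $\varepsilon$-tripod between $\gamma_X,\gamma_Y$ if for all $t\in\mathbf{R}$, $z,z'\in Z$: $(\bigvee_{[t]^\varepsilon}d_X)(\varphi_X(z),\varphi_X(z'))\le d_Y(t)(\varphi_Y(z),\varphi_Y(z'))+2\varepsilon$ and $(\bigvee_{[t]^\varepsilon}d_Y)(\varphi_Y(z),\varphi_Y(z'))\le d_X(t)(\varphi_X(z),\varphi_X(z'))+2\varepsilon$. $d_{\mathtt{dyn}}(\gamma_X,\gamma_Y)$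 is the minimum over tripods of the infimum of $\varepsilon$ for which the tripod is an $\varepsilon$-tripod ($\infty$ if none). Order $\mathbf{Int}\times\mathbf{R}_+$ by $(I,\delta)\le(J,\delta')$ iff $I\subseteq J$, $\delta\le\delta'$. For $(I,\delta)$, let $\sim^I_{X,\delta}$ be the equivalence relation on $X$: $x\sim x'$ iff there are $x=x_0,\dots,x_n=x'$ with $(\bigvee_I d_X)(x_i,x_{i+1})\le\delta$. The spatiotemporal SLHC dendrogram $\theta(\gamma_X):\mathbf{Int}\times\mathbf{R}_+\to\mathbf{Sets}$ sends $(I,\delta)$ to the partition $X/\sim^I_{X,\delta}$ and $(I,\delta)\le(J,\delta')$ to the natural map sending each block to the block of $X/\sim^J_{X,\delta'}$ containing it. For functors $F,G:\mathbf{Int}\times\mathbf{R}_+\to\mathbf{Sets}$, an $\varepsilon$-interleaving consists of natural families of maps $f_{(I,\delta)}:F_{(I,\delta)}\to G_{(I^\varepsilon,\delta+\varepsilon)}$, $g_{(I,\delta)}:G_{(I,\delta)}\to F_{(I^\varepsilon,\delta+\varepsilon)}$ with $g_{(I^\varepsilon,\delta+\varepsilon)}\circ f_{(I,\delta)}=F((I,\delta)\le(I^{2\varepsilon},\delta+2\varepsilon))$ and $f_{(I^\varepsilon,\delta+\varepsilon)}\circ g_{(I,\delta)}=G((I,\delta)\le(I^{2\varepsilon},\delta+2\varepsilon))$. $\mathbf{d}_{\mathrm{I}}^{\mathbf{Sets}}(F,G)$ is the infimum of $\varepsilon$ admitting such an interleaving with all $f_{(I,\delta)},g_{(I,\delta)}$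 surjective ($\infty$ if none). *)

theory Defs
  imports "HOL-Analysis.Analysis" "HOL-Library.Extended_Real"
begin

definition is_pseudometric :: "'a set \<Rightarrow> ('a \<Rightarrow> 'a \<Rightarrow> real) \<Rightarrow> bool" where
  "is_pseudometric X d \<longleftrightarrow>
     (\<forall>x\<in>X. \<forall>y\<in>X. d x y \<ge> 0) \<and> (\<forall>x\<in>X. d x x = 0) \<and>
     (\<forall>x\<in>X. \<forall>y\<in>X. d x y = d y x) \<and>
     (\<forall>x\<in>X. \<forall>y\<in>X. \<forall>z\<in>X. d x z \<le> d x y + d y z)"

definition is_metric_on :: "'a set \<Rightarrow> ('a \<Rightarrow> 'a \<Rightarrow> real) \<Rightarrow> bool" where
  "is_metric_on X d \<longleftrightarrow> is_pseudometric X d \<and> (\<forall>x\<in>X. \<forall>y\<in>X. d x y = 0 \<longrightarrow> x = y)"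

definition DMS :: "'a set \<Rightarrow> (real \<Rightarrow> 'a \<Rightarrow> 'a \<Rightarrow> real) \<Rightarrow> bool" where
  "DMS X d \<longleftrightarrow> finite X \<and> X \<noteq> {} \<and>
     (\<forall>t. is_pseudometric X (d t)) \<and>
     (\<exists>t0. is_metric_on X (d t0)) \<and>
     (\<forall>x\<in>X. \<forall>y\<in>X. continuous_on UNIV (\<lambda>t. d t x y))"

text \<open>Finite closed intervals [u,u'] are represented as pairs (u,u') with u \<le> u'.\<close>
definition bigvee :: "(real \<Rightarrow> 'a \<Rightarrow> 'a \<Rightarrow> real) \<Rightarrow> real \<times> real \<Rightarrow> 'a \<Rightarrow> 'a \<Rightarrow> real" where
  "bigvee d I x y = (INF s\<in>{fst I..snd I}. d s x y)"

definition thicken :: "real \<Rightarrow> real \<times> real \<Rightarrow> real \<times> real" where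
  "thicken e I = (fst I - e, snd I + e)"

definition tripod :: "'c set \<Rightarrow> ('c \<Rightarrow> 'a) \<Rightarrow> ('c \<Rightarrow> 'b) \<Rightarrow> 'a set \<Rightarrow> 'b set \<Rightarrow> bool" where
  "tripod Z pX pY X Y \<longleftrightarrow> pX ` Z = X \<and> pY ` Z = Y"

definition eps_tripod ::
  "real \<Rightarrow> 'c set \<Rightarrow> ('c \<Rightarrow> 'a) \<Rightarrow> ('c \<Rightarrow> 'b) \<Rightarrow>
   'a set \<Rightarrow> (real \<Rightarrow> 'a \<Rightarrow> 'a \<Rightarrow> real) \<Rightarrow> 'b set \<Rightarrow> (real \<Rightarrow> 'b \<Rightarrow> 'b \<Rightarrow> real) \<Rightarrow> bool" where
  "eps_tripod e Z pX pY X dX Y dY \<longleftrightarrow> tripod Z pX pY X Y \<and>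
     (\<forall>t. \<forall>z\<in>Z. \<forall>z'\<in>Z.
        bigvee dX (t - e, t + e) (pX z) (pX z') \<le> dY t (pY z) (pY z') + 2 * e \<and>
        bigvee dY (t - e, t + e) (pY z) (pY z') \<le> dX t (pX z) (pX z') + 2 * e)"

text \<open>Tripods are taken with Z a set of pairs (any tripod can be replaced by its
  image in X \<times> Y, which has the same distortion).\<close>
definition d_dyn :: "'a set \<Rightarrow> (real \<Rightarrow> 'a \<Rightarrow> 'a \<Rightarrow> real) \<Rightarrow> 'b set \<Rightarrow> (real \<Rightarrow> 'b \<Rightarrow> 'b \<Rightarrow> real) \<Rightarrow> ereal" where
  "d_dyn X dX Y dY =
     (INF T \<in> {(Z :: ('a \<times> 'b) set, pX, pY). tripod Z pX pY X Y}.
        (case T of (Z, pX, pY) \<Rightarrow>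
          Inf {ereal e | e. e \<ge> 0 \<and> eps_tripod e Z pX pY X dX Y dY}))"

definition idx :: "((real \<times> real) \<times> real) set" where
  "idx = {(I, \<delta>). fst I \<le> snd I \<and> \<delta> \<ge> 0}"

definition idx_le :: "(real \<times> real) \<times> real \<Rightarrow> (real \<times> real) \<times> real \<Rightarrow> bool" where
  "idx_le a b \<longleftrightarrow> {fst (fst a)..snd (fst a)} \<subseteq> {fst (fst b)..snd (fst b)} \<and> snd a \<le> snd b"

definition shift :: "real \<Rightarrow> (real \<times> real) \<times> real \<Rightarrow> (real \<times> real) \<times> real" where
  "shift e a = (thicken e (fst a), snd a + e)"

definition slhc_rel :: "'a set \<Rightarrow> (real \<Rightarrow> 'a \<Rightarrow> 'a \<Rightarrow> real) \<Rightarrow> (real \<times> real) \<times> real \<Rightarrow> 'a \<Rightarrow> 'a \<Rightarrow> bool" where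
  "slhc_rel X d a = (\<lambda>x y. x \<in> X \<and> y \<in> X \<and> bigvee d (fst a) x y \<le> snd a)\<^sup>*\<^sup>*"

definition slhc_class :: "'a set \<Rightarrow> (real \<Rightarrow> 'a \<Rightarrow> 'a \<Rightarrow> real) \<Rightarrow> (real \<times> real) \<times> real \<Rightarrow> 'a \<Rightarrow> 'a set" where
  "slhc_class X d a x = {y \<in> X. slhc_rel X d a x y}"

definition theta_obj :: "'a set \<Rightarrow> (real \<Rightarrow> 'a \<Rightarrow> 'a \<Rightarrow> real) \<Rightarrow> (real \<times> real) \<times> real \<Rightarrow> 'a set set" where
  "theta_obj X d a = slhc_class X d a ` X"

definition theta_map :: "'a set \<Rightarrow> (real \<Rightarrow> 'a \<Rightarrow> 'a \<Rightarrow> real) \<Rightarrow>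
    (real \<times> real) \<times> real \<Rightarrow> (real \<times> real) \<times> real \<Rightarrow> 'a set \<Rightarrow> 'a set" where
  "theta_map X d a b B = (THE C. C \<in> theta_obj X d b \<and> B \<subseteq> C)"

text \<open>A functor is given by its object map F0 and its morphism map F1 a b (for a \<le> b).
  The maps f, g are families indexed by objects; equalities of maps are required on the domains.\<close>
definition eps_interleaving ::
  "real \<Rightarrow> (((real \<times> real) \<times> real) \<Rightarrow> 'c set) \<Rightarrow> (((real \<times> real) \<times> real) \<Rightarrow> ((real \<times> real) \<times> real) \<Rightarrow> 'c \<Rightarrow> 'c)
   \<Rightarrow> (((real \<times> real) \<times> real) \<Rightarrow> 'd set) \<Rightarrow> (((real \<times> real) \<times> real) \<Rightarrow> ((real \<times> real) \<times> real) \<Rightarrow> 'd \<Rightarrow> 'd)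
   \<Rightarrow> (((real \<times> real) \<times> real) \<Rightarrow> 'c \<Rightarrow> 'd) \<Rightarrow> (((real \<times> real) \<times> real) \<Rightarrow> 'd \<Rightarrow> 'c) \<Rightarrow> bool" where
  "eps_interleaving e F0 F1 G0 G1 f g \<longleftrightarrow>
     (\<forall>a\<in>idx. f a ` F0 a = G0 (shift e a)) \<and>
     (\<forall>a\<in>idx. g a ` G0 a = F0 (shift e a)) \<and>
     (\<forall>a\<in>idx. \<forall>b\<in>idx. idx_le a b \<longrightarrow>
        (\<forall>x\<in>F0 a. G1 (shift e a) (shift e b) (f a x) = f b (F1 a b x)) \<and>
        (\<forall>y\<in>G0 a. F1 (shift e a) (shift e b) (g a y) = g b (G1 a b y))) \<and>
     (\<forall>a\<in>idx. \<forall>x\<in>F0 a. g (shift e a) (f a x) = F1 a (shift (2 * e) a) x) \<and>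
     (\<forall>a\<in>idx. \<forall>y\<in>G0 a. f (shift e a) (g a y) = G1 a (shift (2 * e) a) y)"

definition dI_sets ::
  "(((real \<times> real) \<times> real) \<Rightarrow> 'c set) \<Rightarrow> (((real \<times> real) \<times> real) \<Rightarrow> ((real \<times> real) \<times> real) \<Rightarrow> 'c \<Rightarrow> 'c)
   \<Rightarrow> (((real \<times> real) \<times> real) \<Rightarrow> 'd set) \<Rightarrow> (((real \<times> real) \<times> real) \<Rightarrow> ((real \<times> real) \<times> real) \<Rightarrow> 'd \<Rightarrow> 'd)
   \<Rightarrow> ereal" where
  "dI_sets F0 F1 G0 G1 = Inf {ereal e | e. e \<ge> 0 \<and> (\<exists>f g. eps_interleaving e F0 F1 G0 G1 f g)}"

end

theory Submission
  imports Defs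
begin

(* An eps-tripod Z transfers every single-linkage step between x and x' at scale (I, delta) in X
   to a step between any of their lifts at scale (I^(2 eps), delta + 2 eps) in Y: the minimum of
   d_X over I is attained at some time s, and the tripod inequality at s bounds d_Y on
   [s - eps, s + eps], a subinterval of I^(2 eps).  Since the projections are surjective, whole
   chains transfer as well, so sending the block of pX z to the block of pY z is a well-defined
   surjection from theta(X)(I, delta) onto theta(Y)(I^(2 eps), delta + 2 eps).  These maps and the
   ones obtained from the reversed tripod are natural, and composing them only coarsens the
   partition, so they form a (2 eps)-interleaving. *)

lemma DMS_nonneg: "DMS X d \<Longrightarrow> x \<in> X \<Longrightarrow> y \<in> X \<Longrightarrow> d s x y \<ge> 0"
  unfolding DMS_def is_pseudometric_def by blast

lemma DMS_commute: "DMS X d \<Longrightarrow> x \<in> X \<Longrightarrow> y \<in> X \<Longrightarrow> d s x y = d s y x"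
  unfolding DMS_def is_pseudometric_def by blast

lemma DMS_self_zero: "DMS X d \<Longrightarrow> x \<in> X \<Longrightarrow> d s x x = 0"
  unfolding DMS_def is_pseudometric_def by blast

lemma DMS_bdd_below: "DMS X d \<Longrightarrow> x \<in> X \<Longrightarrow> y \<in> X \<Longrightarrow> bdd_below ((\<lambda>s. d s x y) ` S)"
  by (rule bdd_belowI[of _ 0]) (auto dest: DMS_nonneg)

lemma bigvee_antimono:
  assumes "DMS X d" "x \<in> X" "y \<in> X" "fst I \<le> snd I" "{fst I..snd I} \<subseteq> {fst J..snd J}"
  shows "bigvee d J x y \<le> bigvee d I x y"
  unfolding bigvee_def by (rule cINF_superset_mono) (use assms DMS_bdd_below in auto)

lemma bigvee_commute: "DMS X d \<Longrightarrow> x \<in> X \<Longrightarrow> y \<in> X \<Longrightarrow> bigvee d I x y = bigvee d I y x"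
  unfolding bigvee_def by (simp add: DMS_commute)

lemma bigvee_self_zero: "DMS X d \<Longrightarrow> x \<in> X \<Longrightarrow> fst I \<le> snd I \<Longrightarrow> bigvee d I x x = 0"
  unfolding bigvee_def by (simp add: DMS_self_zero)

lemma bigvee_attained:
  assumes "DMS X d" "x \<in> X" "y \<in> X" "fst I \<le> snd I"
  obtains s where "s \<in> {fst I..snd I}" "d s x y = bigvee d I x y"
proof -
  have "continuous_on UNIV (\<lambda>t. d t x y)"
    using assms(1-3) unfolding DMS_def by blast
  then have "continuous_on {fst I..snd I} (\<lambda>t. d t x y)"
    by (rule continuous_on_subset) simp
  moreover have "{fst I..snd I} \<noteq> {}" using assms(4) by simp
  ultimately obtain s where s: "s \<in> {fst I..snd I}" "\<forall>t\<in>{fst I..snd I}. d s x y \<le> d t x y"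
    using continuous_attains_inf[OF compact_Icc] by blast
  have "d s x y \<le> bigvee d I x y"
    unfolding bigvee_def by (rule cINF_greatest) (use s assms(4) in auto)
  moreover have "bigvee d I x y \<le> d s x y"
    unfolding bigvee_def by (rule cINF_lower[OF DMS_bdd_below[OF assms(1-3)] s(1)])
  ultimately show thesis using that s(1) by simp
qed

lemma equivp_slhc_rel:
  assumes "DMS X d"
  shows "equivp (slhc_rel X d a)"
  unfolding slhc_rel_def
  by (rule equivp_rtranclp, rule sympI) (use bigvee_commute[OF assms] in auto)

lemma slhc_class_eq:
  assumes "DMS X d" "slhc_rel X d a x y"
  shows "slhc_class X d a x = slhc_class X d a y"
proof -
  have "slhc_rel X d a x = slhc_rel X d a y"
    using equivp_slhc_rel[OF assms(1)] assms(2) unfolding equivp_def by blast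
  then show ?thesis unfolding slhc_class_def by simp
qed

lemma slhc_class_self: "x \<in> X \<Longrightarrow> x \<in> slhc_class X d a x"
  unfolding slhc_class_def slhc_rel_def by simp

lemma slhc_rel_mono:
  assumes "DMS X d" "a \<in> idx" "idx_le a b"
  shows "slhc_rel X d a \<le> slhc_rel X d b"
  unfolding slhc_rel_def
proof (rule rtranclp_mono, clarify)
  fix x y assume xy: "x \<in> X" "y \<in> X" "bigvee d (fst a) x y \<le> snd a"
  have "bigvee d (fst b) x y \<le> bigvee d (fst a) x y"
    by (rule bigvee_antimono) (use assms xy in \<open>auto simp: idx_def idx_le_def\<close>)
  with xy assms(3) show "bigvee d (fst b) x y \<le> snd b"
    unfolding idx_le_def by linarith
qed

lemma theta_map_slhc_class:
  assumes "DMS X d" "a \<in> idx" "idx_le a b" "x \<in> X"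
  shows "theta_map X d a b (slhc_class X d a x) = slhc_class X d b x"
  unfolding theta_map_def
proof (rule the_equality)
  show "slhc_class X d b x \<in> theta_obj X d b \<and> slhc_class X d a x \<subseteq> slhc_class X d b x"
    using assms(4) slhc_rel_mono[OF assms(1-3)] unfolding theta_obj_def slhc_class_def by blast
next
  fix C assume C: "C \<in> theta_obj X d b \<and> slhc_class X d a x \<subseteq> C"
  then obtain y where y: "C = slhc_class X d b y" unfolding theta_obj_def by auto
  have "x \<in> C" using C slhc_class_self[OF assms(4)] by blast
  with y have "slhc_rel X d b y x" by (simp add: slhc_class_def)
  with y show "C = slhc_class X d b x" using slhc_class_eq[OF assms(1)] by simp
qed

lemma theta_obj_eq_image: "p ` Z = X \<Longrightarrow> theta_obj X d a = (\<lambda>z. slhc_class X d a (p z)) ` Z"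
  unfolding theta_obj_def by auto

lemma shift_in_idx: "E \<ge> 0 \<Longrightarrow> a \<in> idx \<Longrightarrow> shift E a \<in> idx"
  unfolding idx_def shift_def thicken_def by auto

lemma idx_le_shift: "E \<ge> 0 \<Longrightarrow> a \<in> idx \<Longrightarrow> idx_le a b \<Longrightarrow> idx_le (shift E a) (shift E b)"
  unfolding idx_def shift_def thicken_def idx_le_def by auto

lemma idx_le_self_shift: "E \<ge> 0 \<Longrightarrow> a \<in> idx \<Longrightarrow> idx_le a (shift E a)"
  unfolding idx_def shift_def thicken_def idx_le_def by auto

lemma shift_shift: "shift E (shift E a) = shift (2 * E) a"
  unfolding shift_def thicken_def by auto

lemma eps_tripod_surj:
  assumes "eps_tripod e Z pX pY X dX Y dY"
  shows "pX ` Z = X" and "pY ` Z = Y"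
  using assms unfolding eps_tripod_def tripod_def by auto

lemma eps_tripod_swap: "eps_tripod e Z pX pY X dX Y dY \<Longrightarrow> eps_tripod e Z pY pX Y dY X dX"
  unfolding eps_tripod_def tripod_def by blast

lemma rtranclp_transfer_along_surj:
  assumes "R\<^sup>*\<^sup>* (p z) (p z')" "z \<in> Z" "z' \<in> Z"
    and source_in_image: "\<And>u v. R u v \<Longrightarrow> u \<in> p ` Z"
    and refl: "\<And>z. z \<in> Z \<Longrightarrow> R (p z) (p z)"
    and transfer: "\<And>z z'. z \<in> Z \<Longrightarrow> z' \<in> Z \<Longrightarrow> R (p z) (p z') \<Longrightarrow> S (q z) (q z')"
  shows "S\<^sup>*\<^sup>* (q z) (q z')"
proof -
  have "S\<^sup>*\<^sup>* (q z) (q z')" if "R\<^sup>*\<^sup>* (p z) w" "z' \<in> Z" "p z' = w" for w z'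
    using that
  proof (induction arbitrary: z' rule: rtranclp_induct)
    case base
    then show ?case using refl transfer \<open>z \<in> Z\<close> by (metis r_into_rtranclp)
  next
    case (step w u)
    then obtain z'' where "z'' \<in> Z" "p z'' = w" using source_in_image by blast
    with step show ?case by (metis rtranclp.rtrancl_into_rtrancl transfer)
  qed
  with assms(1,3) show ?thesis by blast
qed

lemma eps_tripod_transfers_step:
  assumes dX: "DMS X dX" and dY: "DMS Y dY" and tr: "eps_tripod e Z pX pY X dX Y dY"
    and "e \<ge> 0" and a: "a \<in> idx" and z: "z \<in> Z" "z' \<in> Z"
    and step: "bigvee dX (fst a) (pX z) (pX z') \<le> snd a"
  shows "bigvee dY (fst (shift (2 * e) a)) (pY z) (pY z') \<le> snd (shift (2 * e) a)"
proof -
  have mem: "pX z \<in> X" "pX z' \<in> X" "pY z \<in> Y" "pY z' \<in> Y"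
    using eps_tripod_surj[OF tr] z by auto
  have "fst (fst a) \<le> snd (fst a)" using a unfolding idx_def by auto
  then obtain s where s: "s \<in> {fst (fst a)..snd (fst a)}"
      "dX s (pX z) (pX z') = bigvee dX (fst a) (pX z) (pX z')"
    by (rule bigvee_attained[OF dX mem(1,2)])
  have "bigvee dY (fst (shift (2 * e) a)) (pY z) (pY z') \<le> bigvee dY (s - e, s + e) (pY z) (pY z')"
    by (rule bigvee_antimono[OF dY mem(3,4)]) (use \<open>e \<ge> 0\<close> s in \<open>auto simp: shift_def thicken_def\<close>)
  also have "\<dots> \<le> dX s (pX z) (pX z') + 2 * e"
    using tr z unfolding eps_tripod_def by blast
  finally show ?thesis using s step by (simp add: shift_def)
qed

lemma eps_tripod_transfers_slhc_rel:
  assumes dX: "DMS X dX" and dY: "DMS Y dY" and tr: "eps_tripod e Z pX pY X dX Y dY"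
    and "e \<ge> 0" and a: "a \<in> idx" and z: "z \<in> Z" "z' \<in> Z"
    and "slhc_rel X dX a (pX z) (pX z')"
  shows "slhc_rel Y dY (shift (2 * e) a) (pY z) (pY z')"
proof -
  note surj = eps_tripod_surj[OF tr]
  show ?thesis
    using assms(8) z unfolding slhc_rel_def
  proof (rule rtranclp_transfer_along_surj)
    show "u \<in> pX ` Z" if "u \<in> X \<and> v \<in> X \<and> bigvee dX (fst a) u v \<le> snd a" for u v
      using that surj by blast
    show "pX w \<in> X \<and> pX w \<in> X \<and> bigvee dX (fst a) (pX w) (pX w) \<le> snd a" if "w \<in> Z" for w
      using that surj a bigvee_self_zero[OF dX] unfolding idx_def by auto
    show "pY w \<in> Y \<and> pY w' \<in> Y \<and>
        bigvee dY (fst (shift (2 * e) a)) (pY w) (pY w') \<le> snd (shift (2 * e) a)"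
      if "w \<in> Z" "w' \<in> Z" "pX w \<in> X \<and> pX w' \<in> X \<and> bigvee dX (fst a) (pX w) (pX w') \<le> snd a"
      for w w'
      using that surj eps_tripod_transfers_step[OF dX dY tr \<open>e \<ge> 0\<close> a] by blast
  qed
qed

(* For E = 2 e and an e-tripod the choice of the lift z of B does not matter,
   see tripod_block_map_slhc_class. *)
definition tripod_block_map :: "real \<Rightarrow> 'c set \<Rightarrow> ('c \<Rightarrow> 'a) \<Rightarrow> ('c \<Rightarrow> 'b) \<Rightarrow> 'b set \<Rightarrow>
    (real \<Rightarrow> 'b \<Rightarrow> 'b \<Rightarrow> real) \<Rightarrow> (real \<times> real) \<times> real \<Rightarrow> 'a set \<Rightarrow> 'b set" where
  "tripod_block_map E Z pX pY Y dY a B =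
     slhc_class Y dY (shift E a) (pY (SOME z. z \<in> Z \<and> pX z \<in> B))"

lemma tripod_block_map_slhc_class:
  assumes dX: "DMS X dX" and dY: "DMS Y dY" and tr: "eps_tripod e Z pX pY X dX Y dY"
    and "e \<ge> 0" and a: "a \<in> idx" and "z \<in> Z"
  shows "tripod_block_map (2 * e) Z pX pY Y dY a (slhc_class X dX a (pX z))
           = slhc_class Y dY (shift (2 * e) a) (pY z)"
proof -
  define z' where "z' = (SOME z'. z' \<in> Z \<and> pX z' \<in> slhc_class X dX a (pX z))"
  have "pX z \<in> X" using eps_tripod_surj(1)[OF tr] \<open>z \<in> Z\<close> by blast
  then have "\<exists>z'. z' \<in> Z \<and> pX z' \<in> slhc_class X dX a (pX z)"
    using \<open>z \<in> Z\<close> slhc_class_self[of "pX z" X dX a] by blast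
  then have z': "z' \<in> Z \<and> pX z' \<in> slhc_class X dX a (pX z)"
    unfolding z'_def by (rule someI_ex)
  then have "slhc_rel Y dY (shift (2 * e) a) (pY z) (pY z')"
    using eps_tripod_transfers_slhc_rel[OF dX dY tr \<open>e \<ge> 0\<close> a \<open>z \<in> Z\<close>]
    by (simp add: slhc_class_def)
  then have "slhc_class Y dY (shift (2 * e) a) (pY z) = slhc_class Y dY (shift (2 * e) a) (pY z')"
    by (rule slhc_class_eq[OF dY])
  then show ?thesis
    unfolding tripod_block_map_def z'_def[symmetric] by simp
qed

lemma tripod_block_map_surj:
  assumes dX: "DMS X dX" and dY: "DMS Y dY" and tr: "eps_tripod e Z pX pY X dX Y dY"
    and "e \<ge> 0" and a: "a \<in> idx"
  shows "tripod_block_map (2 * e) Z pX pY Y dY a ` theta_obj X dX a = theta_obj Y dY (shift (2 * e) a)"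
proof -
  note surj = eps_tripod_surj[OF tr]
  have "tripod_block_map (2 * e) Z pX pY Y dY a ` theta_obj X dX a
      = (\<lambda>z. tripod_block_map (2 * e) Z pX pY Y dY a (slhc_class X dX a (pX z))) ` Z"
    unfolding theta_obj_eq_image[OF surj(1)] by (simp add: image_image)
  also have "\<dots> = (\<lambda>z. slhc_class Y dY (shift (2 * e) a) (pY z)) ` Z"
    using tripod_block_map_slhc_class[OF dX dY tr \<open>e \<ge> 0\<close> a] by simp
  also have "\<dots> = theta_obj Y dY (shift (2 * e) a)"
    by (simp add: theta_obj_eq_image[OF surj(2)])
  finally show ?thesis .
qed

lemma tripod_block_map_natural:
  assumes dX: "DMS X dX" and dY: "DMS Y dY" and tr: "eps_tripod e Z pX pY X dX Y dY"
    and e: "e \<ge> 0" and a: "a \<in> idx" and b: "b \<in> idx" and ab: "idx_le a b"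
    and B: "B \<in> theta_obj X dX a"
  shows "theta_map Y dY (shift (2 * e) a) (shift (2 * e) b) (tripod_block_map (2 * e) Z pX pY Y dY a B)
         = tripod_block_map (2 * e) Z pX pY Y dY b (theta_map X dX a b B)"
proof -
  note surj = eps_tripod_surj[OF tr]
  obtain z where z: "z \<in> Z" "B = slhc_class X dX a (pX z)"
    using B theta_obj_eq_image[OF surj(1)] by auto
  have e2: "2 * e \<ge> 0" using e by simp
  have "theta_map Y dY (shift (2 * e) a) (shift (2 * e) b) (tripod_block_map (2 * e) Z pX pY Y dY a B)
      = theta_map Y dY (shift (2 * e) a) (shift (2 * e) b) (slhc_class Y dY (shift (2 * e) a) (pY z))"
    using tripod_block_map_slhc_class[OF dX dY tr e a z(1)] z(2) by simp
  also have "\<dots> = slhc_class Y dY (shift (2 * e) b) (pY z)"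
    using theta_map_slhc_class[OF dY shift_in_idx[OF e2 a] idx_le_shift[OF e2 a ab]] z(1) surj(2)
    by blast
  also have "\<dots> = tripod_block_map (2 * e) Z pX pY Y dY b (slhc_class X dX b (pX z))"
    using tripod_block_map_slhc_class[OF dX dY tr e b z(1)] by simp
  also have "\<dots> = tripod_block_map (2 * e) Z pX pY Y dY b (theta_map X dX a b B)"
    using theta_map_slhc_class[OF dX a ab] z surj(1) by auto
  finally show ?thesis .
qed

lemma tripod_block_map_comp:
  assumes dX: "DMS X dX" and dY: "DMS Y dY" and tr: "eps_tripod e Z pX pY X dX Y dY"
    and e: "e \<ge> 0" and a: "a \<in> idx" and B: "B \<in> theta_obj X dX a"
  shows "tripod_block_map (2 * e) Z pY pX X dX (shift (2 * e) a) (tripod_block_map (2 * e) Z pX pY Y dY a B)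
         = theta_map X dX a (shift (2 * (2 * e)) a) B"
proof -
  note surj = eps_tripod_surj(1)[OF tr]
  obtain z where z: "z \<in> Z" "B = slhc_class X dX a (pX z)"
    using B theta_obj_eq_image[OF surj] by auto
  have e2: "2 * e \<ge> 0" using e by simp
  have "tripod_block_map (2 * e) Z pY pX X dX (shift (2 * e) a) (tripod_block_map (2 * e) Z pX pY Y dY a B)
      = tripod_block_map (2 * e) Z pY pX X dX (shift (2 * e) a) (slhc_class Y dY (shift (2 * e) a) (pY z))"
    using tripod_block_map_slhc_class[OF dX dY tr e a z(1)] z(2) by simp
  also have "\<dots> = slhc_class X dX (shift (2 * (2 * e)) a) (pX z)"
    using tripod_block_map_slhc_class[OF dY dX eps_tripod_swap[OF tr] e shift_in_idx[OF e2 a] z(1)]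
    by (simp add: shift_shift)
  also have "\<dots> = theta_map X dX a (shift (2 * (2 * e)) a) B"
    using theta_map_slhc_class[OF dX a idx_le_self_shift[OF _ a]] e z surj by auto
  finally show ?thesis .
qed

lemma eps_interleaving_tripod_block_map:
  assumes dX: "DMS X dX" and dY: "DMS Y dY" and tr: "eps_tripod e Z pX pY X dX Y dY" and e: "e \<ge> 0"
  shows "eps_interleaving (2 * e) (theta_obj X dX) (theta_map X dX) (theta_obj Y dY) (theta_map Y dY)
           (tripod_block_map (2 * e) Z pX pY Y dY) (tripod_block_map (2 * e) Z pY pX X dX)"
proof -
  note tr' = eps_tripod_swap[OF tr]
  show ?thesis
    unfolding eps_interleaving_def
    by (intro conjI ballI impI
        tripod_block_map_surj[OF dX dY tr e] tripod_block_map_surj[OF dY dX tr' e]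
        tripod_block_map_natural[OF dX dY tr e] tripod_block_map_natural[OF dY dX tr' e]
        tripod_block_map_comp[OF dX dY tr e] tripod_block_map_comp[OF dY dX tr' e])
qed

lemma dI_sets_le_eps_interleaving:
  "eps_interleaving e F0 F1 G0 G1 f g \<Longrightarrow> e \<ge> 0 \<Longrightarrow> dI_sets F0 F1 G0 G1 \<le> ereal e"
  unfolding dI_sets_def by (rule Inf_lower) blast

lemma le_mult_d_dyn:
  fixes D :: ereal and X :: "'a set" and Y :: "'b set"
  assumes "c > 0"
    and bound: "\<And>e (Z :: ('a \<times> 'b) set) pX pY. e \<ge> 0 \<Longrightarrow> eps_tripod e Z pX pY X dX Y dY \<Longrightarrow> D \<le> ereal (c * e)"
  shows "D \<le> ereal c * d_dyn X dX Y dY"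
proof -
  have "ereal (1 / c) * D \<le> ereal e"
    if "e \<ge> 0" "eps_tripod e Z pX pY X dX Y dY" for e and Z :: "('a \<times> 'b) set" and pX pY
  proof -
    have "ereal (1 / c) * D \<le> ereal (1 / c) * ereal (c * e)"
      by (rule ereal_mult_left_mono[OF bound[OF that]]) (use \<open>c > 0\<close> in simp)
    also have "\<dots> = ereal e" using \<open>c > 0\<close> by simp
    finally show ?thesis .
  qed
  then have "ereal (1 / c) * D \<le> d_dyn X dX Y dY"
    unfolding d_dyn_def by (auto intro!: INF_greatest Inf_greatest)
  then have "ereal c * (ereal (1 / c) * D) \<le> ereal c * d_dyn X dX Y dY"
    using \<open>c > 0\<close> by (simp add: ereal_mult_left_mono)
  then show ?thesis using \<open>c > 0\<close> by (simp add: mult.assoc[symmetric])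
qed

theorem theorem6p17:
  fixes X :: "'a set" and dX :: "real \<Rightarrow> 'a \<Rightarrow> 'a \<Rightarrow> real"
    and Y :: "'b set" and dY :: "real \<Rightarrow> 'b \<Rightarrow> 'b \<Rightarrow> real"
  assumes "DMS X dX" and "DMS Y dY"
  shows "dI_sets (theta_obj X dX) (theta_map X dX) (theta_obj Y dY) (theta_map Y dY)
           \<le> 2 * d_dyn X dX Y dY"
proof -
  have "dI_sets (theta_obj X dX) (theta_map X dX) (theta_obj Y dY) (theta_map Y dY)
          \<le> ereal 2 * d_dyn X dX Y dY"
  proof (rule le_mult_d_dyn)
    fix e and Z :: "('a \<times> 'b) set" and pX pY
    assume "e \<ge> 0" and "eps_tripod e Z pX pY X dX Y dY"
    then show "dI_sets (theta_obj X dX) (theta_map X dX) (theta_obj Y dY) (theta_map Y dY) \<le> ereal (2 * e)"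
      using dI_sets_le_eps_interleaving[OF eps_interleaving_tripod_block_map[OF assms]] by simp
  qed simp
  then show ?thesis by simp
qed

end
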